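(* For each integer $i\geq1$, $\mathrm{Aut}_i(H)$ is a normal subgroup of $\mathrm{Aut}_*(H)$, and for $1\le i\le j$ let $\pi_i^j:\mathrm{Aut}_*(H)/\mathrm{Aut}_j(H)\to\mathrm{Aut}_*(H)/\mathrm{Aut}_i(H)$ be the canonical epimorphism. Then $\{\mathrm{Aut}_*(H)/\mathrm{Aut}_i(H),\pi_i^j\}$ is an inverse system of groups indexed by the positive integers, and the map $\mathrm{Aut}_*(H)\to\varprojlim\mathrm{Aut}_*(H)/\mathrm{Aut}_i(H)$, $\phi\mapsto(\phi\,\mathrm{Aut}_i(H))_{i\geq1}$, is a group isomorphism.
   Context: Let $k$ be a field and $0\neq q\in k$ not a root of unity. Let $H=k_q[x,x^{-1},y]$ be the $k$-algebra generated by $x,x^{-1},y$ subject to $xx^{-1}=x^{-1}x=1$, $yx=qxy$, a Hopf algebra with $\Delta(x)=x\otimes x$, $\Delta(x^{-1})=x^{-1}\otimes x^{-1}$, $\Delta(y)=y\otimes x+1\otimes y$, $\varepsilon(x)=1$, $\varepsilon(y)=0$. The elements $x^ny^m$ ($n\in\mathbb{Z}$, $m\in\mathbb{N}$) form a $k$-basis, and $\Delta(x^ny^m)=\sum_{i=0}^m\binom{m}{i}_q x^ny^i\otimes x^{n+i}y^{m-i}$ ($q$-binomial coefficients). Let $H_0=\mathrm{span}\{x^n:n\in\mathbb{Z}\}$ and $H(m)=H_0y^m$. $\mathrm{Aut}_c(H)$ is the group under composition of coalgebra automorphisms of $H$; $\mathrm{Aut}_0(H)=\{\phi\in\mathrm{Aut}_c(H):\phi(1)=1\}$;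 $\mathrm{Aut}_*(H)$ is the set of $\phi\in\mathrm{Aut}_0(H)$ such that for each $n\in\mathbb{Z}$ there is $\beta_n\in k$ with $\phi(x^ny)=x^ny+\beta_n(x^{n+1}-x^n)$; for $m\geq1$, $\mathrm{Aut}_m(H)=\{\phi\in\mathrm{Aut}_c(H):\phi(h)=h\ \text{for all }h\in\sum_{i=0}^mH(i)\}$. *)

theory Defs
  imports "HOL-Library.Poly_Mapping" "HOL-Algebra.Algebra"
begin

section \<open>The quantum plane Hopf algebra H = k_q[x,x^-1,y] as a coalgebra\<close>

text \<open>An element of H is a finitely supported function on the basis
  x^n y^m, indexed by the pair (n,m) with n integer, m natural.
  Elements of H tensor H are finitely supported functions on pairs of basis indices.\<close>

type_synonym 'k qH = "(int \<times> nat) \<Rightarrow>\<^sub>0 'k"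
type_synonym 'k qHH = "((int \<times> nat) \<times> (int \<times> nat)) \<Rightarrow>\<^sub>0 'k"

definition smult :: "'k::field \<Rightarrow> ('a \<Rightarrow>\<^sub>0 'k) \<Rightarrow> ('a \<Rightarrow>\<^sub>0 'k)" where
  "smult c p = Poly_Mapping.map (\<lambda>v. c * v) p"

definition xy :: "int \<Rightarrow> nat \<Rightarrow> 'k::field qH" where
  "xy n m = Poly_Mapping.single (n, m) 1"

definition lin_ext :: "('a \<Rightarrow> ('b \<Rightarrow>\<^sub>0 'k::field)) \<Rightarrow> ('a \<Rightarrow>\<^sub>0 'k) \<Rightarrow> ('b \<Rightarrow>\<^sub>0 'k)" where
  "lin_ext f p = (\<Sum>a\<in>Poly_Mapping.keys p. smult (Poly_Mapping.lookup p a) (f a))"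

fun qbinom :: "'k::field \<Rightarrow> nat \<Rightarrow> nat \<Rightarrow> 'k" where
  "qbinom q m 0 = 1"
| "qbinom q 0 (Suc i) = 0"
| "qbinom q (Suc m) (Suc i) = qbinom q m i + q ^ Suc i * qbinom q m (Suc i)"

definition comult :: "'k::field \<Rightarrow> 'k qH \<Rightarrow> 'k qHH" where
  "comult q = lin_ext (\<lambda>(n, m). \<Sum>i\<le>m.
      smult (qbinom q m i) (Poly_Mapping.single ((n, i), (n + int i, m - i)) 1))"

definition counit :: "'k::field qH \<Rightarrow> 'k" where
  "counit p = (\<Sum>a\<in>Poly_Mapping.keys p. Poly_Mapping.lookup p a * (if snd a = 0 then 1 else 0))"

definition tens :: "'k::field qH \<Rightarrow> 'k qH \<Rightarrow> 'k qHH" where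
  "tens u v = (\<Sum>a\<in>Poly_Mapping.keys u. \<Sum>b\<in>Poly_Mapping.keys v. Poly_Mapping.single (a, b) (Poly_Mapping.lookup u a * Poly_Mapping.lookup v b))"

definition tmap :: "('k::field qH \<Rightarrow> 'k qH) \<Rightarrow> ('k qH \<Rightarrow> 'k qH) \<Rightarrow> 'k qHH \<Rightarrow> 'k qHH" where
  "tmap f g = lin_ext (\<lambda>(a, b). tens (f (Poly_Mapping.single a 1)) (g (Poly_Mapping.single b 1)))"

definition k_linear :: "('k::field qH \<Rightarrow> 'k qH) \<Rightarrow> bool" where
  "k_linear f \<longleftrightarrow> (\<forall>u v. f (u + v) = f u + f v) \<and> (\<forall>c u. f (smult c u) = smult c (f u))"

definition coalg_map :: "'k::field \<Rightarrow> ('k qH \<Rightarrow> 'k qH) \<Rightarrow> bool" where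
  "coalg_map q f \<longleftrightarrow> k_linear f \<and> (\<forall>h. comult q (f h) = tmap f f (comult q h))
       \<and> (\<forall>h. counit (f h) = counit h)"

definition Aut_c :: "'k::field \<Rightarrow> ('k qH \<Rightarrow> 'k qH) set" where
  "Aut_c q = {f. coalg_map q f \<and> bij f}"

definition Aut_0 :: "'k::field \<Rightarrow> ('k qH \<Rightarrow> 'k qH) set" where
  "Aut_0 q = {f \<in> Aut_c q. f (xy 0 0) = xy 0 0}"

definition Aut_star :: "'k::field \<Rightarrow> ('k qH \<Rightarrow> 'k qH) set" where
  "Aut_star q = {f \<in> Aut_0 q. \<forall>n::int. \<exists>\<beta>::'k.
      f (xy n 1) = xy n 1 + smult \<beta> (xy (n + 1) 0 - xy n 0)}"

definition Hdeg :: "nat \<Rightarrow> 'k::field qH set" where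
  "Hdeg i = {p. \<forall>a\<in>Poly_Mapping.keys p. snd a = i}"

definition Hsum :: "nat \<Rightarrow> 'k::field qH set" where
  "Hsum m = {(\<Sum>i\<le>m. h i) | h. \<forall>i\<le>m. h i \<in> Hdeg i}"

definition Aut_m :: "'k::field \<Rightarrow> nat \<Rightarrow> ('k qH \<Rightarrow> 'k qH) set" where
  "Aut_m q m = {f \<in> Aut_c q. \<forall>h\<in>Hsum m. f h = h}"

definition comp_grp :: "('k qH \<Rightarrow> 'k qH) set \<Rightarrow> ('k qH \<Rightarrow> 'k qH) monoid" where
  "comp_grp S = \<lparr>carrier = S, monoid.mult = (\<circ>), one = id\<rparr>"

text \<open>canonical map G/M -> G/N, gM |-> gN (for M contained in N)\<close>
definition canon_proj :: "('a, 'b) monoid_scheme \<Rightarrow> 'a set \<Rightarrow> 'a set \<Rightarrow> 'a set" where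
  "canon_proj G N C = (\<Union>g\<in>C. g <#\<^bsub>G\<^esub> N)"

definition inverse_system ::
  "nat set \<Rightarrow> (nat \<Rightarrow> ('a, 'b) monoid_scheme) \<Rightarrow> (nat \<Rightarrow> nat \<Rightarrow> 'a \<Rightarrow> 'a) \<Rightarrow> bool" where
  "inverse_system I G p \<longleftrightarrow>
     (\<forall>i\<in>I. group (G i))
   \<and> (\<forall>i\<in>I. \<forall>j\<in>I. i \<le> j \<longrightarrow> p i j \<in> hom (G j) (G i))
   \<and> (\<forall>i\<in>I. \<forall>x\<in>carrier (G i). p i i x = x)
   \<and> (\<forall>i\<in>I. \<forall>j\<in>I. \<forall>k\<in>I. i \<le> j \<and> j \<le> k \<longrightarrow>
        (\<forall>x\<in>carrier (G k). p i j (p j k x) = p i k x))"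

definition inverse_limit ::
  "nat set \<Rightarrow> (nat \<Rightarrow> ('a, 'b) monoid_scheme) \<Rightarrow> (nat \<Rightarrow> nat \<Rightarrow> 'a \<Rightarrow> 'a) \<Rightarrow> (nat \<Rightarrow> 'a) monoid" where
  "inverse_limit I G p =
     \<lparr>carrier = {c \<in> (\<Pi>\<^sub>E i\<in>I. carrier (G i)). \<forall>i\<in>I. \<forall>j\<in>I. i \<le> j \<longrightarrow> p i j (c j) = c i},
      monoid.mult = (\<lambda>c d. \<lambda>i\<in>I. c i \<otimes>\<^bsub>G i\<^esub> d i),
      one = (\<lambda>i\<in>I. \<one>\<^bsub>G i\<^esub>)\<rparr>"

end

theory Submission
  imports Defs
begin

text \<open>Coalgebra automorphisms of H preserve the filtration H(0) + ... + H(m): grouplike elements lie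
  in H_0, and since q is not a root of unity the q-binomial coefficient [j,1] is nonzero, so the
  component x^n y \<otimes> x^(n+1) y^(j-1) of the comultiplication detects the y-degree j. Hence each
  Aut_i(H) is normal in Aut_*(H), and two elements of Aut_*(H) lie in the same coset of Aut_i(H)
  iff they agree on H(0) + ... + H(i). Every element of H has finite y-degree, so the Aut_i(H)
  intersect trivially, and a compatible family of cosets is represented by the automorphism that
  agrees with the i-th representative on H(0) + ... + H(i) for every i. Thus the canonical map into
  the inverse limit is bijective.\<close>

subsection \<open>Inverse limits of quotients by a descending chain of normal subgroups\<close>

lemma (in group) rcos_eq_iff_mult_inv_mem:
  assumes "subgroup H G" "x \<in> carrier G" "y \<in> carrier G"
  shows "H #> x = H #> y \<longleftrightarrow> x \<otimes> inv y \<in> H"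
  using assms rcos_self[of x H] repr_independence[of x H y]
    subgroup.rcos_module[OF assms(1) is_group assms(3,2)]
  by blast

lemma (in group) canon_proj_rcos:
  assumes "subgroup M G" "N \<lhd> G" "M \<subseteq> N" "a \<in> carrier G"
  shows "canon_proj G N (M #> a) = N #> a"
proof -
  interpret N: normal N G by fact
  have "g <#\<^bsub>G\<^esub> N = N #> a" if "g \<in> M #> a" for g
  proof -
    have g: "g \<in> carrier G"
      using that assms(1,4) subgroup.elemrcos_carrier is_group by metis
    have "g \<in> N #> a"
      using that assms(3) by (auto simp: r_coset_def)
    then show ?thesis
      using g assms(4) N.coset_eq repr_independence[OF _ _ N.subgroup_axioms] by metis
  qed
  moreover have "a \<in> M #> a"
    by (rule rcos_self[OF assms(4,1)])
  ultimately show ?thesis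
    unfolding canon_proj_def by blast
qed

lemma (in group) canon_proj_epi:
  assumes M: "M \<lhd> G" and N: "N \<lhd> G" and "M \<subseteq> N"
  shows "canon_proj G N \<in> epi (G Mod M) (G Mod N)"
proof -
  interpret M: normal M G by fact
  interpret N: normal N G by fact
  have proj: "canon_proj G N (M #> a) = N #> a" if "a \<in> carrier G" for a
    using canon_proj_rcos[OF M.subgroup_axioms N \<open>M \<subseteq> N\<close> that] .
  have "canon_proj G N \<in> hom (G Mod M) (G Mod N)"
    by (rule homI) (auto simp: carrier_FactGroup proj M.rcos_sum N.rcos_sum)
  moreover have "canon_proj G N ` carrier (G Mod M) = carrier (G Mod N)"
    by (auto simp: carrier_FactGroup proj image_image)
  ultimately show ?thesis
    by (simp add: epi_def)
qed

definition separated_filtration :: "('a, 'b) monoid_scheme \<Rightarrow> nat set \<Rightarrow> (nat \<Rightarrow> 'a set) \<Rightarrow> bool" where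
  "separated_filtration G I N \<longleftrightarrow> (\<forall>x\<in>carrier G. (\<forall>i\<in>I. x \<in> N i) \<longrightarrow> x = \<one>\<^bsub>G\<^esub>)"

definition complete_filtration :: "('a, 'b) monoid_scheme \<Rightarrow> nat set \<Rightarrow> (nat \<Rightarrow> 'a set) \<Rightarrow> bool" where
  "complete_filtration G I N \<longleftrightarrow> (\<forall>a. (\<forall>i\<in>I. a i \<in> carrier G)
     \<longrightarrow> (\<forall>i\<in>I. \<forall>j\<in>I. i \<le> j \<longrightarrow> N i #>\<^bsub>G\<^esub> a j = N i #>\<^bsub>G\<^esub> a i)
     \<longrightarrow> (\<exists>x\<in>carrier G. \<forall>i\<in>I. N i #>\<^bsub>G\<^esub> x = N i #>\<^bsub>G\<^esub> a i))"

locale normal_filtration = group G for G (structure) +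
  fixes I :: "nat set" and N :: "nat \<Rightarrow> 'a set"
  assumes normal: "i \<in> I \<Longrightarrow> N i \<lhd> G"
    and antimono: "i \<in> I \<Longrightarrow> j \<in> I \<Longrightarrow> i \<le> j \<Longrightarrow> N j \<subseteq> N i"
begin

lemma canon_proj_epi_filtration:
  "i \<in> I \<Longrightarrow> j \<in> I \<Longrightarrow> i \<le> j \<Longrightarrow> canon_proj G (N i) \<in> epi (G Mod N j) (G Mod N i)"
  by (intro canon_proj_epi normal antimono)

lemma canon_proj_rcos_filtration:
  "i \<in> I \<Longrightarrow> j \<in> I \<Longrightarrow> i \<le> j \<Longrightarrow> a \<in> carrier G \<Longrightarrow> canon_proj G (N i) (N j #> a) = N i #> a"
  by (intro canon_proj_rcos normal antimono normal.axioms(1))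

lemma inverse_system_FactGroup:
  "inverse_system I (\<lambda>i. G Mod N i) (\<lambda>i j. canon_proj G (N i))"
  unfolding inverse_system_def
proof (intro conjI ballI impI)
  fix i assume "i \<in> I"
  then show "group (G Mod N i)"
    by (intro normal.factorgroup_is_group normal)
next
  fix i j assume "i \<in> I" "j \<in> I" "i \<le> j"
  then show "canon_proj G (N i) \<in> hom (G Mod N j) (G Mod N i)"
    using canon_proj_epi_filtration by (simp add: epi_def)
next
  fix i x assume "i \<in> I" "x \<in> carrier (G Mod N i)"
  then show "canon_proj G (N i) x = x"
    by (auto simp: carrier_FactGroup canon_proj_rcos_filtration)
next
  fix i j k x assume "i \<in> I" "j \<in> I" "k \<in> I" "i \<le> j \<and> j \<le> k" "x \<in> carrier (G Mod N k)"
  then show "canon_proj G (N i) (canon_proj G (N j) x) = canon_proj G (N i) x"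
    by (auto simp: carrier_FactGroup canon_proj_rcos_filtration)
qed

lemma lcos_eq_rcos_filtration: "i \<in> I \<Longrightarrow> x \<in> carrier G \<Longrightarrow> x <#\<^bsub>G\<^esub> N i = N i #> x"
  using normal.coset_eq normal by blast

abbreviation coset_map :: "'a \<Rightarrow> nat \<Rightarrow> 'a set" where
  "coset_map \<equiv> \<lambda>x. \<lambda>i\<in>I. x <#\<^bsub>G\<^esub> N i"

abbreviation quotient_limit :: "(nat \<Rightarrow> 'a set) monoid" where
  "quotient_limit \<equiv> inverse_limit I (\<lambda>i. G Mod N i) (\<lambda>i j. canon_proj G (N i))"

lemma coset_map_hom: "coset_map \<in> hom G quotient_limit"
proof (rule homI)
  fix x assume x: "x \<in> carrier G"
  then show "coset_map x \<in> carrier quotient_limit"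
    by (auto simp: inverse_limit_def carrier_FactGroup lcos_eq_rcos_filtration canon_proj_rcos_filtration)
next
  fix x y assume "x \<in> carrier G" "y \<in> carrier G"
  then show "coset_map (x \<otimes> y) = coset_map x \<otimes>\<^bsub>quotient_limit\<^esub> coset_map y"
    by (auto simp: inverse_limit_def lcos_eq_rcos_filtration normal.rcos_sum normal intro!: restrict_ext)
qed

lemma inj_on_coset_map:
  assumes "separated_filtration G I N"
  shows "inj_on coset_map (carrier G)"
proof (rule inj_onI)
  fix x y assume x: "x \<in> carrier G" and y: "y \<in> carrier G" and eq: "coset_map x = coset_map y"
  have "x \<otimes> inv y \<in> N i" if "i \<in> I" for i
    using fun_cong[OF eq, of i] that x y normal[OF that]
    by (simp add: lcos_eq_rcos_filtration rcos_eq_iff_mult_inv_mem normal.axioms(1))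
  then have "x \<otimes> inv y = \<one>"
    using assms x y by (simp add: separated_filtration_def)
  then show "x = y"
    using x y by (metis inv_closed inv_equality inv_inv)
qed

lemma coset_map_onto:
  assumes "complete_filtration G I N"
  shows "carrier quotient_limit \<subseteq> coset_map ` carrier G"
proof
  fix c assume c: "c \<in> carrier quotient_limit"
  have "\<exists>a. a \<in> carrier G \<and> c i = N i #> a" if "i \<in> I" for i
  proof -
    have "c i \<in> carrier (G Mod N i)"
      using c that by (auto simp: inverse_limit_def PiE_iff)
    then show ?thesis by (auto simp: carrier_FactGroup)
  qed
  then obtain a where a: "\<And>i. i \<in> I \<Longrightarrow> a i \<in> carrier G \<and> c i = N i #> a i"
    by metis
  have compatible: "N i #> a j = N i #> a i" if "i \<in> I" "j \<in> I" "i \<le> j" for i j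
  proof -
    have "N i #> a j = canon_proj G (N i) (c j)"
      using that a[of j] by (simp add: canon_proj_rcos_filtration)
    also have "\<dots> = c i"
      using c that by (simp add: inverse_limit_def)
    finally show ?thesis
      using that a[of i] by simp
  qed
  have "\<exists>x\<in>carrier G. \<forall>i\<in>I. N i #> x = N i #> a i"
    using assms unfolding complete_filtration_def
  proof (elim allE[of _ a] impE)
    show "\<forall>i\<in>I. a i \<in> carrier G" using a by blast
    show "\<forall>i\<in>I. \<forall>j\<in>I. i \<le> j \<longrightarrow> N i #> a j = N i #> a i" using compatible by blast
  qed
  then obtain x where x: "x \<in> carrier G" "\<And>i. i \<in> I \<Longrightarrow> N i #> x = N i #> a i"
    by blast
  have "coset_map x i = c i" for i
  proof (cases "i \<in> I")
    case True
    then have "coset_map x i = N i #> x"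
      using x(1) by (simp add: lcos_eq_rcos_filtration)
    also have "\<dots> = c i"
      using x(2)[OF True] a[OF True] by (simp only:)
    finally show ?thesis .
  next
    case False
    have "c \<in> (\<Pi>\<^sub>E i\<in>I. carrier (G Mod N i))"
      using c by (simp add: inverse_limit_def)
    with False show ?thesis by (metis PiE_arb restrict_apply)
  qed
  then have "coset_map x = c" ..
  with x show "c \<in> coset_map ` carrier G" by blast
qed

lemma coset_map_iso:
  "separated_filtration G I N \<Longrightarrow> complete_filtration G I N \<Longrightarrow> coset_map \<in> iso G quotient_limit"
  using coset_map_hom inj_on_coset_map coset_map_onto
  by (auto simp: iso_def bij_betw_def dest: hom_carrier)

end

abbreviation coeff :: "('a \<Rightarrow>\<^sub>0 'k::zero) \<Rightarrow> 'a \<Rightarrow> 'k" where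
  "coeff \<equiv> Poly_Mapping.lookup"

abbreviation supp :: "('a \<Rightarrow>\<^sub>0 'k::zero) \<Rightarrow> 'a set" where
  "supp \<equiv> Poly_Mapping.keys"

abbreviation basis :: "'a \<Rightarrow> 'a \<Rightarrow>\<^sub>0 'k::zero_neq_one" where
  "basis a \<equiv> Poly_Mapping.single a 1"

lemma lookup_smult [simp]: "coeff (smult c p) k = c * coeff p k"
  by (simp add: smult_def map.rep_eq when_def)

lemma keys_smult: "supp (smult c p) \<subseteq> supp p"
  by (auto simp: in_keys_iff)

lemma smult_basis: "smult c (basis a) = Poly_Mapping.single a (c::'k::field)"
  by (rule poly_mapping_eqI) (simp add: lookup_single when_def)

lemma smult_add_scalar: "smult a u + smult b u = smult (a + b) u"
  by (rule poly_mapping_eqI) (simp add: lookup_add distrib_right)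

lemma smult_zero_scalar: "smult 0 u = 0"
  by (rule poly_mapping_eqI) simp

lemma poly_mapping_sum_single: "p = (\<Sum>a\<in>supp p. Poly_Mapping.single a (coeff p a))"
  by (rule poly_mapping_eqI) (simp add: lookup_sum lookup_single when_def in_keys_iff)

lemma lookup_lin_ext_superset:
  assumes "finite S" "supp p \<subseteq> S"
  shows "coeff (lin_ext f p) k = (\<Sum>a\<in>S. coeff p a * coeff (f a) k)"
proof -
  have "coeff (lin_ext f p) k = (\<Sum>a\<in>supp p. coeff p a * coeff (f a) k)"
    by (simp add: lin_ext_def lookup_sum)
  also have "\<dots> = (\<Sum>a\<in>S. coeff p a * coeff (f a) k)"
    using assms by (intro sum.mono_neutral_left) (auto simp: in_keys_iff)
  finally show ?thesis .
qed

lemma lookup_lin_ext: "coeff (lin_ext f p) k = (\<Sum>a\<in>supp p. coeff p a * coeff (f a) k)"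
  by (rule lookup_lin_ext_superset) auto

lemma lin_ext_add: "lin_ext f (p + r) = lin_ext f p + lin_ext f r"
proof (rule poly_mapping_eqI)
  fix k
  let ?S = "supp p \<union> supp r"
  have S: "finite ?S" "supp (p + r) \<subseteq> ?S" "supp p \<subseteq> ?S" "supp r \<subseteq> ?S"
    using keys_add[of p r] by auto
  show "coeff (lin_ext f (p + r)) k = coeff (lin_ext f p + lin_ext f r) k"
    unfolding lookup_add lookup_lin_ext_superset[OF S(1,2)]
      lookup_lin_ext_superset[OF S(1,3)] lookup_lin_ext_superset[OF S(1,4)]
    by (simp add: lookup_add distrib_right sum.distrib)
qed

lemma lin_ext_smult: "lin_ext f (smult c p) = smult c (lin_ext f p)"
proof (rule poly_mapping_eqI)
  fix k
  have "coeff (lin_ext f (smult c p)) k = (\<Sum>a\<in>supp p. coeff (smult c p) a * coeff (f a) k)"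
    using keys_smult[of c p] by (intro lookup_lin_ext_superset) auto
  then show "coeff (lin_ext f (smult c p)) k = coeff (smult c (lin_ext f p)) k"
    by (simp add: lookup_lin_ext sum_distrib_left mult.assoc)
qed

lemma lin_ext_diff: "lin_ext f (p - r) = lin_ext f p - lin_ext f r"
  by (metis eq_diff_eq lin_ext_add)

lemma lin_ext_basis: "lin_ext f (basis a :: _ \<Rightarrow>\<^sub>0 'k::field) = f a"
  by (rule poly_mapping_eqI) (simp add: lookup_lin_ext)

lemma lin_ext_sum: "finite S \<Longrightarrow> lin_ext f (\<Sum>x\<in>S. g x) = (\<Sum>x\<in>S. lin_ext f (g x))"
  by (induction S rule: finite_induct) (simp_all add: lin_ext_add, simp add: lin_ext_def)

lemma keys_lin_ext: "supp (lin_ext f p) \<subseteq> (\<Union>a\<in>supp p. supp (f a))"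
proof
  fix k assume "k \<in> supp (lin_ext f p)"
  then have "(\<Sum>a\<in>supp p. coeff p a * coeff (f a) k) \<noteq> 0"
    by (simp add: in_keys_iff lookup_lin_ext)
  then obtain a where "a \<in> supp p" "coeff (f a) k \<noteq> 0"
    by (metis (no_types, lifting) mult_zero_right sum.neutral)
  then show "k \<in> (\<Union>a\<in>supp p. supp (f a))" by (auto simp: in_keys_iff)
qed

lemma k_linear_zero: "k_linear f \<Longrightarrow> f 0 = 0"
  unfolding k_linear_def by (metis add_cancel_right_right)

lemma k_linear_add: "k_linear f \<Longrightarrow> f (u + v) = f u + f v"
  by (simp add: k_linear_def)

lemma k_linear_smult: "k_linear f \<Longrightarrow> f (smult c u) = smult c (f u)"
  by (simp add: k_linear_def)

lemma k_linear_diff: "k_linear f \<Longrightarrow> f (u - v) = f u - f v"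
  by (metis eq_diff_eq k_linear_add)

lemma k_linear_sum:
  assumes "k_linear f"
  shows "finite S \<Longrightarrow> f (\<Sum>x\<in>S. g x) = (\<Sum>x\<in>S. f (g x))"
  by (induction S rule: finite_induct) (simp_all add: assms k_linear_zero k_linear_add)

lemma k_linear_eq_lin_ext: "k_linear f \<Longrightarrow> f p = lin_ext (\<lambda>a. f (basis a)) p"
proof -
  assume L: "k_linear f"
  have "f p = f (\<Sum>a\<in>supp p. smult (coeff p a) (basis a))"
    by (subst poly_mapping_sum_single[of p]) (simp add: smult_basis)
  also have "\<dots> = (\<Sum>a\<in>supp p. smult (coeff p a) (f (basis a)))"
    using L by (simp add: k_linear_sum k_linear_smult)
  finally show ?thesis by (simp add: lin_ext_def)
qed

lemma k_linear_id: "k_linear id"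
  by (simp add: k_linear_def)

lemma k_linear_comp: "k_linear f \<Longrightarrow> k_linear g \<Longrightarrow> k_linear (f \<circ> g)"
  by (simp add: k_linear_def)

lemma k_linear_inv:
  assumes "k_linear f" "bij f"
  shows "k_linear (Hilbert_Choice.inv f)"
  unfolding k_linear_def
proof (intro conjI allI)
  fix u v c
  show "Hilbert_Choice.inv f (u + v) = Hilbert_Choice.inv f u + Hilbert_Choice.inv f v"
    using assms by (metis bij_inv_eq_iff k_linear_add)
  show "Hilbert_Choice.inv f (smult c u) = smult c (Hilbert_Choice.inv f u)"
    using assms by (metis bij_inv_eq_iff k_linear_smult)
qed

lemma lookup_tens: "coeff (tens u v) (a, b) = coeff u a * coeff v b"
proof -
  have "coeff (tens u v) (a, b)
      = (\<Sum>a'\<in>supp u. ((\<Sum>b'\<in>supp v. (coeff u a' * coeff v b' when b' = b)) when a' = a))"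
    unfolding tens_def lookup_sum lookup_single by (intro sum.cong refl) (auto simp: when_def)
  then show ?thesis
    by (simp add: when_def in_keys_iff)
qed

lemma in_keys_tens: "(a, b) \<in> supp (tens u v) \<longleftrightarrow> a \<in> supp u \<and> b \<in> supp v"
  by (auto simp: in_keys_iff lookup_tens)

lemma tens_basis: "tens (basis a) (basis b :: _ \<Rightarrow>\<^sub>0 'k::field) = basis (a, b)"
  by (rule poly_mapping_eqI) (auto simp: lookup_tens lookup_single when_def split: if_splits)

lemma tmap_add: "tmap f g (P + Q) = tmap f g P + tmap f g Q"
  unfolding tmap_def by (rule lin_ext_add)

lemma tmap_basis: "tmap f g (basis (a, b)) = tens (f (basis a)) (g (basis b))"
  unfolding tmap_def by (simp add: lin_ext_basis)

lemma tmap_tens: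
  assumes "k_linear f" "k_linear g"
  shows "tmap f g (tens u v) = tens (f u) (g v)"
proof (rule poly_mapping_eqI)
  fix k :: "(int \<times> nat) \<times> (int \<times> nat)"
  obtain c d where k: "k = (c, d)" by (cases k)
  have "coeff (tmap f g (tens u v)) (c, d)
     = (\<Sum>(a, b)\<in>supp u \<times> supp v. coeff (tens u v) (a, b) * coeff (tens (f (basis a)) (g (basis b))) (c, d))"
    unfolding tmap_def
    by (subst lookup_lin_ext_superset[of "supp u \<times> supp v"]) (auto simp: in_keys_tens case_prod_unfold)
  also have "\<dots> = (\<Sum>a\<in>supp u. coeff u a * coeff (f (basis a)) c) * (\<Sum>b\<in>supp v. coeff v b * coeff (g (basis b)) d)"
    by (simp add: sum.cartesian_product[symmetric] sum_product lookup_tens mult_ac)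
  also have "\<dots> = coeff (f u) c * coeff (g v) d"
    using k_linear_eq_lin_ext[OF assms(1), of u] k_linear_eq_lin_ext[OF assms(2), of v]
    by (simp add: lookup_lin_ext)
  finally show "coeff (tmap f g (tens u v)) k = coeff (tens (f u) (g v)) k"
    by (simp add: k lookup_tens)
qed

lemma tmap_id: "tmap id id P = P"
proof (rule poly_mapping_eqI)
  fix k
  have "coeff (tmap id id P) k = (\<Sum>a\<in>supp P. if a = k then coeff P a else 0)"
    unfolding tmap_def lookup_lin_ext
    by (intro sum.cong refl) (simp add: case_prod_unfold tens_basis lookup_single when_def)
  then show "coeff (tmap id id P) k = coeff P k"
    by (simp add: in_keys_iff)
qed

lemma tmap_comp:
  assumes "k_linear f"
  shows "tmap f f (tmap g g P) = tmap (f \<circ> g) (f \<circ> g) P"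
proof -
  have "tmap f f (tmap g g P)
      = (\<Sum>x\<in>supp P. smult (coeff P x) (tmap f f (tens (g (basis (fst x))) (g (basis (snd x))))))"
    unfolding tmap_def[of g] lin_ext_def
    by (simp add: tmap_def[of f] lin_ext_sum lin_ext_smult case_prod_unfold)
  also have "\<dots> = tmap (f \<circ> g) (f \<circ> g) P"
    unfolding tmap_def[of "f \<circ> g"] lin_ext_def
    by (simp add: tmap_tens[OF assms assms] case_prod_unfold)
  finally show ?thesis .
qed

lemma tmap_cong:
  assumes "\<And>a b. (a, b) \<in> supp P \<Longrightarrow> f (basis a) = g (basis a) \<and> f (basis b) = g (basis b)"
  shows "tmap f f P = tmap g g P"
  unfolding tmap_def lin_ext_def using assms by (intro sum.cong refl) auto

lemma keys_tmap:
  "supp (tmap f g P) \<subseteq> (\<Union>(a, b)\<in>supp P. supp (f (basis a)) \<times> supp (g (basis b)))"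
  unfolding tmap_def using keys_lin_ext in_keys_tens by fastforce

lemma coalg_map_id: "coalg_map q id"
  by (simp add: coalg_map_def k_linear_id tmap_id)

lemma coalg_map_comp:
  assumes f: "coalg_map q f" and g: "coalg_map q g"
  shows "coalg_map q (f \<circ> g)"
proof -
  have "k_linear f" "k_linear g" using f g by (simp_all add: coalg_map_def)
  moreover have "comult q ((f \<circ> g) h) = tmap (f \<circ> g) (f \<circ> g) (comult q h)" for h
    using f g \<open>k_linear f\<close> by (simp add: coalg_map_def tmap_comp)
  ultimately show ?thesis
    using f g by (simp add: coalg_map_def k_linear_comp)
qed

lemma coalg_map_inv:
  assumes f: "coalg_map q f" and "bij f"
  shows "coalg_map q (Hilbert_Choice.inv f)"
proof -
  let ?g = "Hilbert_Choice.inv f"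
  have lin: "k_linear ?g" using f assms(2) by (simp add: coalg_map_def k_linear_inv)
  have f_g: "f (?g h) = h" for h using assms(2) by (simp add: bij_is_surj surj_f_inv_f)
  have "comult q (?g h) = tmap ?g ?g (comult q h)" for h
  proof -
    have "comult q (?g h) = tmap (?g \<circ> f) (?g \<circ> f) (comult q (?g h))"
      using assms(2) by (simp add: bij_is_inj tmap_id)
    also have "\<dots> = tmap ?g ?g (comult q (f (?g h)))"
      using f by (simp add: tmap_comp[OF lin] coalg_map_def)
    finally show ?thesis by (simp add: f_g)
  qed
  moreover have "counit (?g h) = counit h" for h
    using f f_g by (metis coalg_map_def)
  ultimately show ?thesis using lin by (simp add: coalg_map_def)
qed

lemma Aut_c_id: "id \<in> Aut_c q"
  by (simp add: Aut_c_def coalg_map_id)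

lemma Aut_c_comp: "f \<in> Aut_c q \<Longrightarrow> g \<in> Aut_c q \<Longrightarrow> f \<circ> g \<in> Aut_c q"
  by (simp add: Aut_c_def coalg_map_comp bij_comp)

lemma Aut_c_inv: "f \<in> Aut_c q \<Longrightarrow> Hilbert_Choice.inv f \<in> Aut_c q"
  by (simp add: Aut_c_def coalg_map_inv bij_imp_bij_inv)

lemma Aut_c_k_linear: "f \<in> Aut_c q \<Longrightarrow> k_linear f"
  by (simp add: Aut_c_def coalg_map_def)

lemma Aut_c_bij: "f \<in> Aut_c q \<Longrightarrow> bij f"
  by (simp add: Aut_c_def)

lemma in_Hsum_iff: "p \<in> Hsum m \<longleftrightarrow> (\<forall>a\<in>supp p. snd a \<le> m)"
proof
  assume "p \<in> Hsum m"
  then obtain h where p: "p = (\<Sum>i\<le>m. h i)" and h: "\<forall>i\<le>m. h i \<in> Hdeg i"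
    unfolding Hsum_def by blast
  show "\<forall>a\<in>supp p. snd a \<le> m"
    using keys_sum[of h "{..m}"] h by (fastforce simp: p Hdeg_def)
next
  assume deg: "\<forall>a\<in>supp p. snd a \<le> m"
  define h where "h i = (\<Sum>a\<in>{a\<in>supp p. snd a = i}. Poly_Mapping.single a (coeff p a))" for i
  have "h i \<in> Hdeg i" for i
  proof -
    have "supp (h i) \<subseteq> (\<Union>a\<in>{a\<in>supp p. snd a = i}. supp (Poly_Mapping.single a (coeff p a)))"
      unfolding h_def by (rule keys_sum)
    then show ?thesis by (auto simp: Hdeg_def split: if_splits)
  qed
  moreover have "(\<Sum>i\<le>m. h i) = p"
    unfolding h_def using deg
    by (subst (2) poly_mapping_sum_single, intro sum.group) auto
  ultimately show "p \<in> Hsum m"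
    unfolding Hsum_def by blast
qed

lemma Hsum_mono: "p \<in> Hsum i \<Longrightarrow> i \<le> j \<Longrightarrow> p \<in> Hsum j"
  by (auto simp: in_Hsum_iff)

lemma Hsum_add: "u \<in> Hsum i \<Longrightarrow> v \<in> Hsum i \<Longrightarrow> u + v \<in> Hsum i"
  using keys_add[of u v] by (auto simp: in_Hsum_iff)

lemma Hsum_smult: "u \<in> Hsum i \<Longrightarrow> smult c u \<in> Hsum i"
  using keys_smult[of c u] by (auto simp: in_Hsum_iff)

lemma basis_in_Hsum_iff: "basis (n, m) \<in> Hsum i \<longleftrightarrow> m \<le> i"
  by (simp add: in_Hsum_iff)

lemma lin_ext_in_Hsum: "(\<And>a. a \<in> supp p \<Longrightarrow> f a \<in> Hsum m) \<Longrightarrow> lin_ext f p \<in> Hsum m"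
  using keys_lin_ext[of f p] by (fastforce simp: in_Hsum_iff)

definition Hsum_bound :: "'k::field qH \<Rightarrow> nat" where
  "Hsum_bound p = Suc (Max (insert 0 (snd ` supp p)))"

lemma Hsum_bound_pos: "1 \<le> Hsum_bound p"
  by (simp add: Hsum_bound_def)

lemma in_Hsum_bound: "p \<in> Hsum (Hsum_bound p)"
  by (auto simp: in_Hsum_iff Hsum_bound_def le_SucI)

subsection \<open>Coalgebra maps preserve the filtration\<close>

lemma comult_basis:
  "comult q (basis (n, m)) = (\<Sum>i\<le>m. smult (qbinom q m i) (basis ((n, i), (n + int i, m - i))))"
  by (simp add: comult_def lin_ext_basis)

lemma comult_add: "comult q (u + v) = comult q u + comult q v"
  unfolding comult_def by (rule lin_ext_add)

lemma comult_smult: "comult q (smult c u) = smult c (comult q u)"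
  unfolding comult_def by (rule lin_ext_smult)

lemma comult_diff: "comult q (u - v) = comult q u - comult q v"
  unfolding comult_def by (rule lin_ext_diff)

lemma lookup_comult_basis:
  "coeff (comult q (basis (n, m))) ((n', i), (n'', r))
     = (if n' = n \<and> n'' = n + int i \<and> i \<le> m \<and> r = m - i then qbinom q m i else 0)"
proof -
  have "coeff (comult q (basis (n, m))) ((n', i), (n'', r))
      = (\<Sum>l\<le>m. if l = i then (if n' = n \<and> n'' = n + int i \<and> r = m - i then qbinom q m i else 0) else 0)"
    unfolding comult_basis lookup_sum
    by (intro sum.cong refl) (auto simp: lookup_single when_def)
  then show ?thesis by auto
qed

lemma comult_grouplike: "comult q (basis (n, 0)) = basis ((n, 0), (n, 0))"
  by (simp add: comult_basis smult_basis)

lemma lookup_comult: "coeff (comult q p) k = (\<Sum>a\<in>supp p. coeff p a * coeff (comult q (basis a)) k)"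
  unfolding comult_def lookup_lin_ext by (simp add: lin_ext_basis)

lemma keys_comult:
  assumes "((n', i), b) \<in> supp (comult q p)"
  obtains m where "(n', m) \<in> supp p" "i \<le> m" "b = (n' + int i, m - i)"
proof -
  obtain a where a: "a \<in> supp p" "coeff (comult q (basis a)) ((n', i), b) \<noteq> 0"
    using assms by (metis (no_types, lifting) in_keys_iff lookup_comult mult_zero_right sum.neutral)
  obtain n m where "a = (n, m)" by (cases a)
  with a that show thesis
    by (cases b) (auto simp: lookup_comult_basis split: if_splits)
qed

lemma qbinom_1: "(1 - q) * qbinom q (Suc m) 1 = 1 - q ^ Suc m"
proof (induction m)
  case (Suc m)
  have "qbinom q (Suc (Suc m)) 1 = 1 + q * qbinom q (Suc m) 1"
    by simp
  then have "(1 - q) * qbinom q (Suc (Suc m)) 1 = (1 - q) + q * ((1 - q) * qbinom q (Suc m) 1)"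
    by (simp add: algebra_simps del: qbinom.simps)
  also have "\<dots> = 1 - q ^ Suc (Suc m)"
    unfolding Suc.IH by (simp add: algebra_simps del: qbinom.simps)
  finally show ?case .
qed simp

lemma qbinom_1_neq_zero: "0 < j \<Longrightarrow> q ^ j \<noteq> 1 \<Longrightarrow> qbinom q j 1 \<noteq> 0"
  using qbinom_1[of q "j - 1"] by (cases j) auto

lemma lookup_comult_y1:
  assumes "2 \<le> j"
  shows "coeff (comult q p) ((n, 1), (n + 1, j - 1)) = coeff p (n, j) * qbinom q j 1"
proof -
  have "coeff p a * coeff (comult q (basis a)) ((n, 1), (n + 1, j - 1))
      = (if a = (n, j) then coeff p (n, j) * qbinom q j 1 else 0)" for a
    using assms by (cases a) (auto simp: lookup_comult_basis simp del: qbinom.simps)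
  then show ?thesis
    unfolding lookup_comult[of q p] by (simp add: in_keys_iff del: qbinom.simps)
qed

lemma grouplike_in_Hsum0:
  assumes "comult q g = tens g g"
  shows "g \<in> Hsum 0"
  unfolding in_Hsum_iff
proof
  fix a assume "a \<in> supp g"
  moreover obtain n j where a: "a = (n, j)" by (cases a)
  ultimately have "((n, j), (n, j)) \<in> supp (comult q g)"
    using assms by (simp add: in_keys_tens)
  then show "snd a \<le> 0"
    by (rule keys_comult) (simp add: a)
qed

lemma coalg_map_basis_in_Hsum0:
  assumes "coalg_map q f"
  shows "f (basis (n, 0)) \<in> Hsum 0"
proof (rule grouplike_in_Hsum0)
  show "comult q (f (basis (n, 0))) = tens (f (basis (n, 0))) (f (basis (n, 0)))"
    using assms by (simp add: coalg_map_def comult_grouplike tmap_basis)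
qed

lemma coalg_map_preserves_Hsum0:
  assumes "coalg_map q f" "p \<in> Hsum 0"
  shows "f p \<in> Hsum 0"
proof -
  have "f p = lin_ext (\<lambda>a. f (basis a)) p"
    using assms(1) unfolding coalg_map_def by (blast intro: k_linear_eq_lin_ext)
  also have "\<dots> \<in> Hsum 0"
    using assms coalg_map_basis_in_Hsum0 by (intro lin_ext_in_Hsum) (force simp: in_Hsum_iff)
  finally show ?thesis .
qed

lemma keys_comult_Hsum_Suc:
  assumes "p \<in> Hsum (Suc m)" "(a, b) \<in> supp (comult q p)"
  shows "snd a = 0 \<or> snd b \<le> m"
proof -
  obtain n i where a: "a = (n, i)" by (cases a)
  from assms(2) obtain l where "(n, l) \<in> supp p" "b = (n + int i, l - i)"
    unfolding a by (rule keys_comult)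
  with assms(1) show ?thesis
    by (auto simp: a in_Hsum_iff)
qed

text \<open>This is where the hypothesis on q enters: the q-binomial coefficient [j,1] does not vanish.\<close>
lemma in_Hsum_Suc_if_keys_comult:
  assumes q: "\<forall>n>0. q ^ n \<noteq> 1"
    and keys: "\<And>a b. (a, b) \<in> supp (comult q p) \<Longrightarrow> snd a = 0 \<or> snd b \<le> m"
  shows "p \<in> Hsum (Suc m)"
  unfolding in_Hsum_iff
proof (rule ballI, rule ccontr)
  fix a assume a: "a \<in> supp p" "\<not> snd a \<le> Suc m"
  obtain n j where nj: "a = (n, j)" by (cases a)
  have "coeff (comult q p) ((n, 1), (n + 1, j - 1)) = coeff p (n, j) * qbinom q j 1"
    using a by (intro lookup_comult_y1) (simp add: nj)
  moreover have "qbinom q j 1 \<noteq> 0"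
    using a q by (intro qbinom_1_neq_zero) (auto simp: nj)
  ultimately have "coeff (comult q p) ((n, 1), (n + 1, j - 1)) \<noteq> 0"
    using a by (simp add: nj in_keys_iff del: qbinom.simps)
  then have "snd (n, 1 :: nat) = 0 \<or> snd (n + 1, j - 1) \<le> m"
    by (intro keys) (simp add: in_keys_iff)
  with a show False by (simp add: nj)
qed

lemma coalg_map_preserves_Hsum:
  assumes f: "coalg_map q f" and q: "\<forall>n>0. q ^ n \<noteq> 1"
  shows "p \<in> Hsum m \<Longrightarrow> f p \<in> Hsum m"
proof (induction m arbitrary: p)
  case 0
  then show ?case by (rule coalg_map_preserves_Hsum0[OF f])
next
  case (Suc m)
  show ?case
  proof (rule in_Hsum_Suc_if_keys_comult[OF q])
    fix c d assume "(c, d) \<in> supp (comult q (f p))"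
    then have "(c, d) \<in> supp (tmap f f (comult q p))"
      using f by (simp add: coalg_map_def)
    then obtain a b where ab: "(a, b) \<in> supp (comult q p)"
      and c: "c \<in> supp (f (basis a))" and d: "d \<in> supp (f (basis b))"
      using keys_tmap by blast
    from keys_comult_Hsum_Suc[OF Suc.prems ab] show "snd c = 0 \<or> snd d \<le> m"
    proof
      assume "snd a = 0"
      then have "f (basis a) \<in> Hsum 0"
        using coalg_map_basis_in_Hsum0[OF f] by (metis prod.collapse)
      with c show ?thesis by (simp add: in_Hsum_iff)
    next
      assume "snd b \<le> m"
      then have "f (basis b) \<in> Hsum m"
        by (intro Suc.IH) (simp add: in_Hsum_iff)
      with d show ?thesis by (simp add: in_Hsum_iff)
    qed
  qed
qed

subsection \<open>The group Aut_*(H)\<close>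

lemma comult_y: "comult q (basis (n, 1)) = basis ((n, 0), (n, 1)) + basis ((n, 1), (n + 1, 0))"
  by (simp add: comult_basis smult_basis numeral_2_eq_2)

lemma Aut_star_Aut_c: "f \<in> Aut_star q \<Longrightarrow> f \<in> Aut_c q"
  by (simp add: Aut_star_def Aut_0_def)

text \<open>Comparing the components x^n y \<otimes> - of \<Delta>(f(x^n y)), computed once from the
  coalgebra map property and once from the explicit form of f(x^n y), shows f(x^(n+1)) = x^(n+1).\<close>
lemma Aut_star_fixes_x: "f \<in> Aut_star q \<Longrightarrow> f (xy n 0) = xy n 0"
proof -
  assume f: "f \<in> Aut_star q"
  define m where "m = n - 1"
  have n: "n = m + 1" by (simp add: m_def)
  have cm: "coalg_map q f"
    using Aut_star_Aut_c[OF f] by (simp add: Aut_c_def)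
  obtain \<beta> where u: "f (basis (m, 1)) = basis (m, 1) + smult \<beta> (basis (n, 0) - basis (m, 0))"
    using f unfolding Aut_star_def xy_def n by blast
  let ?u = "f (basis (m, 1))"
  have "(m, 1) \<notin> supp (f (basis (m, 0)))"
    using coalg_map_basis_in_Hsum0[OF cm, of m] by (auto simp: in_Hsum_iff)
  then have "coeff (f (basis (m, 0))) (m, 1) = 0"
    by (simp add: in_keys_iff)
  moreover have "coeff ?u (m, 1) = 1"
    unfolding u by (simp add: lookup_add lookup_minus lookup_single)
  moreover have "comult q ?u = tens (f (basis (m, 0))) ?u + tens ?u (f (basis (n, 0)))"
  proof -
    have "comult q ?u = tmap f f (comult q (basis (m, 1)))"
      using cm by (simp add: coalg_map_def)
    then show ?thesis
      unfolding comult_y tmap_add tmap_basis n .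
  qed
  ultimately have "coeff (comult q ?u) ((m, 1), k) = coeff (f (xy n 0)) k" for k
    by (simp add: lookup_add lookup_tens xy_def)
  moreover have "coeff (comult q ?u) ((m, 1), k) = coeff (xy n 0) k" for k
    unfolding u comult_add comult_smult comult_diff comult_y comult_grouplike
    by (simp add: lookup_add lookup_minus lookup_single xy_def n)
  ultimately show ?thesis
    by (metis poly_mapping_eqI)
qed

lemma Aut_star_fixes_dx:
  assumes "f \<in> Aut_star q"
  shows "f (xy (n + 1) 0 - xy n 0) = xy (n + 1) 0 - xy n 0"
  using assms Aut_c_k_linear[OF Aut_star_Aut_c[OF assms]] by (simp add: Aut_star_fixes_x k_linear_diff)

lemma Aut_star_id: "id \<in> Aut_star q"
  using Aut_c_id[of q] by (auto simp: Aut_star_def Aut_0_def smult_zero_scalar intro: exI[of _ 0])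

lemma Aut_star_comp:
  assumes f: "f \<in> Aut_star q" and g: "g \<in> Aut_star q"
  shows "f \<circ> g \<in> Aut_star q"
proof -
  have L: "k_linear f" using f by (intro Aut_star_Aut_c Aut_c_k_linear)
  have "\<exists>\<beta>. (f \<circ> g) (xy n 1) = xy n 1 + smult \<beta> (xy (n + 1) 0 - xy n 0)" for n
  proof -
    obtain \<beta>f where \<beta>f: "f (xy n 1) = xy n 1 + smult \<beta>f (xy (n + 1) 0 - xy n 0)"
      using f unfolding Aut_star_def by blast
    obtain \<beta>g where \<beta>g: "g (xy n 1) = xy n 1 + smult \<beta>g (xy (n + 1) 0 - xy n 0)"
      using g unfolding Aut_star_def by blast
    have "(f \<circ> g) (xy n 1) = xy n 1 + (smult \<beta>f (xy (n + 1) 0 - xy n 0) + smult \<beta>g (xy (n + 1) 0 - xy n 0))"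
      using \<beta>f \<beta>g L by (simp add: k_linear_add k_linear_smult Aut_star_fixes_dx[OF f] add.assoc)
    then show ?thesis
      by (auto simp: smult_add_scalar)
  qed
  then show ?thesis
    using f g Aut_c_comp[OF Aut_star_Aut_c Aut_star_Aut_c] by (simp add: Aut_star_def Aut_0_def)
qed

lemma Aut_star_inv:
  assumes f: "f \<in> Aut_star q"
  shows "Hilbert_Choice.inv f \<in> Aut_star q"
proof -
  have fc: "f \<in> Aut_c q" using f by (rule Aut_star_Aut_c)
  have L: "k_linear f" and b: "bij f" using fc by (simp_all add: Aut_c_k_linear Aut_c_bij)
  have "\<exists>\<beta>. Hilbert_Choice.inv f (xy n 1) = xy n 1 + smult \<beta> (xy (n + 1) 0 - xy n 0)" for n
  proof -
    obtain \<beta> where \<beta>: "f (xy n 1) = xy n 1 + smult \<beta> (xy (n + 1) 0 - xy n 0)"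
      using f unfolding Aut_star_def by blast
    have "f (xy n 1 + smult (- \<beta>) (xy (n + 1) 0 - xy n 0))
        = xy n 1 + (smult \<beta> (xy (n + 1) 0 - xy n 0) + smult (- \<beta>) (xy (n + 1) 0 - xy n 0))"
      using \<beta> L by (simp add: k_linear_add k_linear_smult Aut_star_fixes_dx[OF f] add.assoc)
    then have "f (xy n 1 + smult (- \<beta>) (xy (n + 1) 0 - xy n 0)) = xy n 1"
      by (simp add: smult_add_scalar smult_zero_scalar)
    then show ?thesis
      using b by (metis bij_inv_eq_iff)
  qed
  moreover have "Hilbert_Choice.inv f (xy 0 0) = xy 0 0"
    using f b by (metis Aut_star_fixes_x bij_inv_eq_iff)
  ultimately show ?thesis
    using Aut_c_inv[OF fc] by (simp add: Aut_star_def Aut_0_def)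
qed

lemma carrier_comp_grp [simp]: "carrier (comp_grp S) = S"
  by (simp add: comp_grp_def)

lemma mult_comp_grp [simp]: "f \<otimes>\<^bsub>comp_grp S\<^esub> g = f \<circ> g"
  by (simp add: comp_grp_def)

lemma one_comp_grp [simp]: "\<one>\<^bsub>comp_grp S\<^esub> = id"
  by (simp add: comp_grp_def)

lemma group_comp_grp:
  assumes "\<And>f. f \<in> S \<Longrightarrow> bij f" "id \<in> S" "\<And>f g. f \<in> S \<Longrightarrow> g \<in> S \<Longrightarrow> f \<circ> g \<in> S"
    and "\<And>f. f \<in> S \<Longrightarrow> Hilbert_Choice.inv f \<in> S"
  shows "group (comp_grp S)"
proof (rule groupI)
  fix f assume "f \<in> carrier (comp_grp S)"
  then show "\<exists>g\<in>carrier (comp_grp S). g \<otimes>\<^bsub>comp_grp S\<^esub> f = \<one>\<^bsub>comp_grp S\<^esub>"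
    using assms(1,4) by (auto intro!: bexI[of _ "Hilbert_Choice.inv f"] simp: bij_is_inj)
qed (use assms in \<open>auto simp: o_assoc\<close>)

lemma inv_comp_grp:
  assumes "group (comp_grp S)" "f \<in> S" "bij f" "Hilbert_Choice.inv f \<in> S"
  shows "inv\<^bsub>comp_grp S\<^esub> f = Hilbert_Choice.inv f"
  using assms by (intro group.inv_equality) (auto simp: bij_is_inj)

lemma group_Aut_star: "group (comp_grp (Aut_star q))"
  by (rule group_comp_grp)
    (auto intro: Aut_star_comp Aut_star_inv Aut_star_id Aut_c_bij Aut_star_Aut_c)

lemma inv_Aut_star: "f \<in> Aut_star q \<Longrightarrow> inv\<^bsub>comp_grp (Aut_star q)\<^esub> f = Hilbert_Choice.inv f"
  by (intro inv_comp_grp group_Aut_star Aut_star_inv Aut_c_bij Aut_star_Aut_c)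

subsection \<open>The normal subgroups Aut_i(H)\<close>

lemma Aut_c_preserves_Hsum:
  "f \<in> Aut_c q \<Longrightarrow> \<forall>n>0. q ^ n \<noteq> 1 \<Longrightarrow> p \<in> Hsum i \<Longrightarrow> f p \<in> Hsum i"
  by (auto simp: Aut_c_def intro: coalg_map_preserves_Hsum)

lemma Aut_m_Aut_c: "f \<in> Aut_m q i \<Longrightarrow> f \<in> Aut_c q"
  by (simp add: Aut_m_def)

lemma Aut_m_fixes: "f \<in> Aut_m q i \<Longrightarrow> p \<in> Hsum i \<Longrightarrow> f p = p"
  by (simp add: Aut_m_def)

lemma Aut_m_subset_Aut_star:
  assumes "1 \<le> i"
  shows "Aut_m q i \<subseteq> Aut_star q"
proof
  fix f assume f: "f \<in> Aut_m q i"
  have "f (xy n m) = xy n m" if "m \<le> i" for n m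
    using f that by (simp add: Aut_m_fixes xy_def basis_in_Hsum_iff)
  then show "f \<in> Aut_star q"
    using Aut_m_Aut_c[OF f] assms by (auto simp: Aut_star_def Aut_0_def smult_zero_scalar intro: exI[of _ 0])
qed

lemma Aut_m_antimono: "i \<le> j \<Longrightarrow> Aut_m q j \<subseteq> Aut_m q i"
  by (auto simp: Aut_m_def intro: Hsum_mono)

lemma Aut_m_inv:
  assumes "f \<in> Aut_m q i"
  shows "Hilbert_Choice.inv f \<in> Aut_m q i"
proof -
  have fc: "f \<in> Aut_c q" using assms by (rule Aut_m_Aut_c)
  have "Hilbert_Choice.inv f p = p" if "p \<in> Hsum i" for p
    using Aut_m_fixes[OF assms that] Aut_c_bij[OF fc] by (metis bij_inv_eq_iff)
  then show ?thesis
    using Aut_c_inv[OF fc] by (simp add: Aut_m_def)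
qed

lemma subgroup_Aut_m:
  assumes "1 \<le> i"
  shows "subgroup (Aut_m q i) (comp_grp (Aut_star q))"
proof (rule group.subgroupI[OF group_Aut_star])
  show "Aut_m q i \<subseteq> carrier (comp_grp (Aut_star q))"
    using Aut_m_subset_Aut_star[OF assms] by simp
  show "Aut_m q i \<noteq> {}"
    using Aut_c_id[of q] by (auto simp: Aut_m_def)
  fix f g assume f: "f \<in> Aut_m q i" and g: "g \<in> Aut_m q i"
  show "inv\<^bsub>comp_grp (Aut_star q)\<^esub> f \<in> Aut_m q i"
    using f Aut_m_subset_Aut_star[OF assms, of q] by (auto simp: inv_Aut_star Aut_m_inv)
  show "f \<otimes>\<^bsub>comp_grp (Aut_star q)\<^esub> g \<in> Aut_m q i"
    using f g by (auto simp: Aut_m_def Aut_c_comp)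
qed

text \<open>Normality rests on coalgebra automorphisms preserving the filtration.\<close>
lemma normal_Aut_m:
  assumes i: "1 \<le> i" and q: "\<forall>n>0. q ^ n \<noteq> 1"
  shows "Aut_m q i \<lhd> comp_grp (Aut_star q)"
  unfolding group.normal_inv_iff[OF group_Aut_star]
proof (intro conjI ballI subgroup_Aut_m[OF i])
  fix g h assume g: "g \<in> carrier (comp_grp (Aut_star q))" and h: "h \<in> Aut_m q i"
  have gc: "g \<in> Aut_c q" using g by (simp add: Aut_star_Aut_c)
  have "(g \<circ> h \<circ> Hilbert_Choice.inv g) p = p" if "p \<in> Hsum i" for p
    using Aut_m_fixes[OF h Aut_c_preserves_Hsum[OF Aut_c_inv[OF gc] q that]] Aut_c_bij[OF gc]
    by (simp add: bij_is_surj surj_f_inv_f)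
  moreover have "g \<circ> h \<circ> Hilbert_Choice.inv g \<in> Aut_c q"
    using gc Aut_m_Aut_c[OF h] by (intro Aut_c_comp Aut_c_inv)
  ultimately show "g \<otimes>\<^bsub>comp_grp (Aut_star q)\<^esub> h \<otimes>\<^bsub>comp_grp (Aut_star q)\<^esub> inv\<^bsub>comp_grp (Aut_star q)\<^esub> g \<in> Aut_m q i"
    using g by (simp add: inv_Aut_star Aut_m_def)
qed

lemma separated_filtration_Aut_m:
  "separated_filtration (comp_grp (Aut_star q)) {1..} (Aut_m q)"
  unfolding separated_filtration_def
proof (intro ballI impI)
  fix f assume f: "\<forall>i\<in>{1..}. f \<in> Aut_m q i"
  have "f p = p" for p
    using f Hsum_bound_pos[of p] Aut_m_fixes[OF _ in_Hsum_bound[of p], of f q] by simp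
  then show "f = \<one>\<^bsub>comp_grp (Aut_star q)\<^esub>"
    unfolding one_comp_grp by (simp add: fun_eq_iff)
qed

lemma rcos_Aut_m_eq_iff:
  assumes i: "1 \<le> i" and q: "\<forall>n>0. q ^ n \<noteq> 1" and f: "f \<in> Aut_star q" and g: "g \<in> Aut_star q"
  shows "Aut_m q i #>\<^bsub>comp_grp (Aut_star q)\<^esub> f = Aut_m q i #>\<^bsub>comp_grp (Aut_star q)\<^esub> g
    \<longleftrightarrow> (\<forall>p\<in>Hsum i. f p = g p)"
proof -
  have gc: "g \<in> Aut_c q" using g by (rule Aut_star_Aut_c)
  have g_inv: "g (Hilbert_Choice.inv g p) = p" "Hilbert_Choice.inv g (g p) = p" for p
    using Aut_c_bij[OF gc] by (simp_all add: bij_is_surj surj_f_inv_f bij_is_inj)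
  have "Aut_m q i #>\<^bsub>comp_grp (Aut_star q)\<^esub> f = Aut_m q i #>\<^bsub>comp_grp (Aut_star q)\<^esub> g
      \<longleftrightarrow> f \<circ> Hilbert_Choice.inv g \<in> Aut_m q i"
    using f g group.rcos_eq_iff_mult_inv_mem[OF group_Aut_star subgroup_Aut_m[OF i], where x = f and y = g]
    by (simp add: inv_Aut_star)
  also have "\<dots> \<longleftrightarrow> (\<forall>p\<in>Hsum i. f (Hilbert_Choice.inv g p) = p)"
    using Aut_star_Aut_c[OF f] gc by (simp add: Aut_m_def Aut_c_comp Aut_c_inv)
  also have "\<dots> \<longleftrightarrow> (\<forall>p\<in>Hsum i. f p = g p)"
    using Aut_c_preserves_Hsum[OF gc q] Aut_c_preserves_Hsum[OF Aut_c_inv[OF gc] q] g_inv by metis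
  finally show ?thesis .
qed

subsection \<open>Completeness: gluing a compatible family of automorphisms\<close>

locale compatible_Aut_star_family =
  fixes q :: "'k::field" and a :: "nat \<Rightarrow> 'k qH \<Rightarrow> 'k qH"
  assumes not_root_of_unity: "\<forall>n>0. q ^ n \<noteq> 1"
    and Aut_star_family: "1 \<le> i \<Longrightarrow> a i \<in> Aut_star q"
    and agree: "1 \<le> i \<Longrightarrow> i \<le> j \<Longrightarrow> p \<in> Hsum i \<Longrightarrow> a j p = a i p"
begin

definition glue :: "'k qH \<Rightarrow> 'k qH" where
  "glue p = a (Hsum_bound p) p"

lemma Aut_c_family: "1 \<le> i \<Longrightarrow> a i \<in> Aut_c q"
  by (simp add: Aut_star_family Aut_star_Aut_c)

lemma glue_eq: "1 \<le> i \<Longrightarrow> p \<in> Hsum i \<Longrightarrow> glue p = a i p"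
  unfolding glue_def by (metis agree in_Hsum_bound Hsum_bound_pos nat_le_linear)

lemma glue_eq_common:
  obtains i where "1 \<le> i" "glue u = a i u" "glue v = a i v" "u \<in> Hsum i" "v \<in> Hsum i"
proof -
  let ?i = "max (Hsum_bound u) (Hsum_bound v)"
  have "u \<in> Hsum ?i" "v \<in> Hsum ?i"
    by (auto intro: Hsum_mono[OF in_Hsum_bound])
  with Hsum_bound_pos[of u] that show thesis
    by (metis glue_eq le_max_iff_disj)
qed

lemma coalg_map_glue: "coalg_map q glue"
  unfolding coalg_map_def k_linear_def
proof (intro conjI allI)
  fix u v :: "'k qH" and c
  obtain i where i: "1 \<le> i" "glue u = a i u" "glue v = a i v" "u \<in> Hsum i" "v \<in> Hsum i"
    by (rule glue_eq_common)
  show "glue (u + v) = glue u + glue v"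
    using i glue_eq[OF i(1) Hsum_add[OF i(4,5)]] Aut_c_k_linear[OF Aut_c_family]
    by (simp add: k_linear_add)
  show "glue (smult c u) = smult c (glue u)"
    using i glue_eq[OF i(1) Hsum_smult[OF i(4)]] Aut_c_k_linear[OF Aut_c_family]
    by (simp add: k_linear_smult)
next
  fix h :: "'k qH"
  let ?i = "Hsum_bound h"
  have a: "coalg_map q (a ?i)" and glue_h: "glue h = a ?i h"
    using Aut_c_family[OF Hsum_bound_pos[of h]] glue_eq[OF Hsum_bound_pos in_Hsum_bound]
    by (simp_all add: Aut_c_def)
  have "tmap (a ?i) (a ?i) (comult q h) = tmap glue glue (comult q h)"
  proof (rule tmap_cong)
    fix x y assume "(x, y) \<in> supp (comult q h)"
    moreover obtain n i where x: "x = (n, i)" by (cases x)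
    ultimately obtain m where "(n, m) \<in> supp h" "i \<le> m" "y = (n + int i, m - i)"
      by (blast elim: keys_comult)
    then have "(basis x :: 'k qH) \<in> Hsum ?i" "(basis y :: 'k qH) \<in> Hsum ?i"
      using in_Hsum_bound[of h] by (auto simp: x in_Hsum_iff)
    then show "a ?i (basis x) = glue (basis x) \<and> a ?i (basis y) = glue (basis y)"
      using glue_eq[OF Hsum_bound_pos[of h]] by simp
  qed
  then show "comult q (glue h) = tmap glue glue (comult q h)"
    using a by (simp add: glue_h coalg_map_def)
  show "counit (glue h) = counit h"
    using a by (simp add: glue_h coalg_map_def)
qed

lemma bij_glue: "bij glue"
proof (rule bijI)
  show "inj glue"
  proof (rule injI)
    fix u v assume "glue u = glue v"
    moreover obtain i where "1 \<le> i" "glue u = a i u" "glue v = a i v"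
      by (rule glue_eq_common)
    ultimately show "u = v"
      using Aut_c_bij[OF Aut_c_family] by (metis bij_is_inj injD)
  qed
  show "surj glue"
  proof (rule surjI)
    fix v :: "'k qH"
    let ?i = "Hsum_bound v"
    have bij: "bij (a ?i)" and inv: "Hilbert_Choice.inv (a ?i) \<in> Aut_c q"
      using Aut_c_family[OF Hsum_bound_pos[of v]] by (simp_all add: Aut_c_bij Aut_c_inv)
    have "Hilbert_Choice.inv (a ?i) v \<in> Hsum ?i"
      using Aut_c_preserves_Hsum[OF inv not_root_of_unity in_Hsum_bound] .
    then show "glue (Hilbert_Choice.inv (a ?i) v) = v"
      using bij by (simp add: glue_eq[OF Hsum_bound_pos] bij_is_surj surj_f_inv_f)
  qed
qed

lemma glue_Aut_star: "glue \<in> Aut_star q"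
proof -
  have "glue (xy n m) = a 1 (xy n m)" if "m \<le> 1" for n m
    using that by (simp add: glue_eq xy_def basis_in_Hsum_iff)
  then show ?thesis
    using Aut_star_family[of 1] coalg_map_glue bij_glue by (simp add: Aut_star_def Aut_0_def Aut_c_def)
qed

end

lemma complete_filtration_Aut_m:
  assumes q: "\<forall>n>0. q ^ n \<noteq> 1"
  shows "complete_filtration (comp_grp (Aut_star q)) {1..} (Aut_m q)"
  unfolding complete_filtration_def
proof (intro allI impI)
  fix a assume a: "\<forall>i\<in>{1..}. a i \<in> carrier (comp_grp (Aut_star q))"
    and compatible: "\<forall>i\<in>{1..}. \<forall>j\<in>{1..}. i \<le> j \<longrightarrow>
      Aut_m q i #>\<^bsub>comp_grp (Aut_star q)\<^esub> a j = Aut_m q i #>\<^bsub>comp_grp (Aut_star q)\<^esub> a i"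
  have a_i: "a i \<in> Aut_star q" if "1 \<le> i" for i
    using a that by simp
  have "a j p = a i p" if "1 \<le> i" "i \<le> j" "p \<in> Hsum i" for i j p
  proof -
    have "Aut_m q i #>\<^bsub>comp_grp (Aut_star q)\<^esub> a j = Aut_m q i #>\<^bsub>comp_grp (Aut_star q)\<^esub> a i"
      using compatible that by (meson atLeast_iff order_trans)
    then show ?thesis
      using rcos_Aut_m_eq_iff[OF that(1) q a_i a_i] that by (meson order_trans)
  qed
  then interpret compatible_Aut_star_family q a
    using q a_i by unfold_locales
  have "Aut_m q i #>\<^bsub>comp_grp (Aut_star q)\<^esub> glue = Aut_m q i #>\<^bsub>comp_grp (Aut_star q)\<^esub> a i"
    if "1 \<le> i" for i
    using rcos_Aut_m_eq_iff[OF that q glue_Aut_star a_i[OF that]] glue_eq[OF that] by simp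
  then show "\<exists>f\<in>carrier (comp_grp (Aut_star q)). \<forall>i\<in>{1..}.
      Aut_m q i #>\<^bsub>comp_grp (Aut_star q)\<^esub> f = Aut_m q i #>\<^bsub>comp_grp (Aut_star q)\<^esub> a i"
    using glue_Aut_star by auto
qed

theorem theorem3p9:
  fixes q :: "'k::field"
  assumes "q \<noteq> 0" and "\<forall>n::nat. n > 0 \<longrightarrow> q ^ n \<noteq> 1"
  shows "(\<forall>i::nat. i \<ge> 1 \<longrightarrow> Aut_m q i \<lhd> comp_grp (Aut_star q))
    \<and> (\<forall>i j::nat. 1 \<le> i \<and> i \<le> j \<longrightarrow>
          canon_proj (comp_grp (Aut_star q)) (Aut_m q i)
            \<in> epi (comp_grp (Aut_star q) Mod Aut_m q j) (comp_grp (Aut_star q) Mod Aut_m q i))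
    \<and> inverse_system {1..} (\<lambda>i. comp_grp (Aut_star q) Mod Aut_m q i)
          (\<lambda>i j. canon_proj (comp_grp (Aut_star q)) (Aut_m q i))
    \<and> (\<lambda>\<phi>. \<lambda>i\<in>{1::nat..}. \<phi> <#\<^bsub>comp_grp (Aut_star q)\<^esub> Aut_m q i)
        \<in> iso (comp_grp (Aut_star q))
              (inverse_limit {1..} (\<lambda>i. comp_grp (Aut_star q) Mod Aut_m q i)
                 (\<lambda>i j. canon_proj (comp_grp (Aut_star q)) (Aut_m q i)))"
proof -
  note q = assms(2)
  interpret normal_filtration "comp_grp (Aut_star q)" "{1..}" "Aut_m q"
    by (intro normal_filtration.intro normal_filtration_axioms.intro group_Aut_star
        normal_Aut_m[OF _ q] Aut_m_antimono) auto
  show ?thesis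
    using normal_Aut_m[OF _ q] canon_proj_epi_filtration inverse_system_FactGroup
      coset_map_iso[OF separated_filtration_Aut_m complete_filtration_Aut_m[OF q]]
    by auto
qed

end
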